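(* Let $n\ge1$ and $\widetilde Z(n;\mathbf x,\mathbf y)=\big[\prod_{i=1}^n x_i^{n-1}y_i^{n-1}\big]Z(n;\mathbf x,\mathbf y)$. Let $S(n;x_n,y_n)$ be defined by the requirement that $\big[\prod_{i=1}^{n-1}x_i^{2(n-1)}\big]S(n;x_n,y_n)$ is the sum of those monomials of $\widetilde Z(n;\mathbf x,\mathbf y)$ in which each $x_i$, $i\le n-1$, has exponent $2(n-1)$ and none of $y_1,\dots,y_{n-1}$ occurs. Then \[ S(n;x_n,y_n)=\Big[\prod_{i=1}^{n-1}\sigma(a^{2i})\Big]\Big(\sigma(a^{2n})x_n^{2(n-1)}-\sigma(a^{2(n-1)})x_n^{2(n-2)}y_n^2\Big). \]
   Context: Notation: $\bar z=z^{-1}$, $\sigma(z)=z-z^{-1}$; $a$ is a fixed nonzero parameter. Vertex weights: at a vertex where a horizontal and a vertical line cross, the four incident edges are oriented with exactly two pointing in. Type 1: horizontal edges in, vertical out; type 2: horizontal out, vertical in; type 3: horizontal right, vertical up; type 4: horizontal left, vertical down; type 5: horizontal left, vertical up; type 6: horizontal right, vertical down. A vertex with spectral parameter $z$ has weight $\sigma(a^2)$ (types 1,2), $\sigma(az)$ (types 3,4), $\sigma(a\bar z)$ (types 5,6). $Z(n;\mathbf x,\mathbf y)$, $\mathbf x=(x_1,\dots,x_n)$, $\mathbf y=(y_1,\dots,y_n)$, is the sum over all states (orientations of internal edges satisfying the two-in rule at every vertex) of the product of vertex weights, on the $n\times n$ grid of vertices $(i,j)$ (row $i$ from the top, column $j$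 from the left), vertex $(i,j)$ having parameter $x_i\bar y_j$, with horizontal boundary edges pointing into the grid and vertical boundary edges pointing out of it (domain-wall boundary). *)

theory Defs
  imports Complex_Main "HOL-Library.Poly_Mapping" "HOL-Library.FuncSet"
begin

datatype var = X nat | Y nat

text \<open>Laurent monomials are finitely supported maps var to int (exponents);
  Laurent polynomials in x, y with complex coefficients are finitely supported
  maps from monomials to complex numbers (multiplication = convolution).\<close>
type_synonym lpoly = "(var \<Rightarrow>\<^sub>0 int) \<Rightarrow>\<^sub>0 complex"

definition sigma :: "complex \<Rightarrow> complex" where
  "sigma z = z - inverse z"

definition lconst :: "complex \<Rightarrow> lpoly" where
  "lconst c = Poly_Mapping.single 0 c"

definition xpow :: "nat \<Rightarrow> int \<Rightarrow> lpoly" where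
  "xpow i e = Poly_Mapping.single (Poly_Mapping.single (X i) e) 1"

definition ypow :: "nat \<Rightarrow> int \<Rightarrow> lpoly" where
  "ypow j e = Poly_Mapping.single (Poly_Mapping.single (Y j) e) 1"

text \<open>sigma(a * z) with z = x_i * y_j^{-1}, as a Laurent polynomial:
  a x_i y_j^{-1} - a^{-1} x_i^{-1} y_j\<close>
definition sig_az :: "complex \<Rightarrow> nat \<Rightarrow> nat \<Rightarrow> lpoly" where
  "sig_az a i j = lconst a * xpow i 1 * ypow j (-1) - lconst (inverse a) * xpow i (-1) * ypow j 1"

text \<open>sigma(a * zbar) with z = x_i * y_j^{-1}: a x_i^{-1} y_j - a^{-1} x_i y_j^{-1}\<close>
definition sig_azbar :: "complex \<Rightarrow> nat \<Rightarrow> nat \<Rightarrow> lpoly" where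
  "sig_azbar a i j = lconst a * xpow i (-1) * ypow j 1 - lconst (inverse a) * xpow i 1 * ypow j (-1)"

text \<open>H (i,j), for row i in 1..n and j in 0..n, is the horizontal edge
  of row i between columns j and j+1 (j = 0: left boundary, j = n: right boundary);
  H (i,j) = True means it points right.
  V (i,j), for i in 0..n and column j in 1..n, is the vertical edge of column j between
  rows i and i+1 (i = 0: top boundary, i = n: bottom boundary; rows counted from the top);
  V (i,j) = True means it points up.\<close>

definition hedges :: "nat \<Rightarrow> (nat \<times> nat) set" where
  "hedges n = {1..n} \<times> {0..n}"

definition vedges :: "nat \<Rightarrow> (nat \<times> nat) set" where
  "vedges n = {0..n} \<times> {1..n}"

definition in_count :: "(nat \<times> nat \<Rightarrow> bool) \<Rightarrow> (nat \<times> nat \<Rightarrow> bool) \<Rightarrow> nat \<Rightarrow> nat \<Rightarrow> nat" where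
  "in_count H V i j =
     (if H (i, j - 1) then 1 else 0) + (if \<not> H (i, j) then 1 else 0)
   + (if \<not> V (i - 1, j) then 1 else 0) + (if V (i, j) then 1 else 0)"

text \<open>Domain-wall states: horizontal boundary edges point into the grid, vertical
  boundary edges point out of it, and the two-in rule holds at every vertex.\<close>
definition dw_states :: "nat \<Rightarrow> ((nat \<times> nat \<Rightarrow> bool) \<times> (nat \<times> nat \<Rightarrow> bool)) set" where
  "dw_states n = {(H, V).
      H \<in> hedges n \<rightarrow>\<^sub>E (UNIV :: bool set) \<and> V \<in> vedges n \<rightarrow>\<^sub>E (UNIV :: bool set)
    \<and> (\<forall>i\<in>{1..n}. H (i, 0) \<and> \<not> H (i, n))
    \<and> (\<forall>j\<in>{1..n}. V (0, j) \<and> \<not> V (n, j))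
    \<and> (\<forall>i\<in>{1..n}. \<forall>j\<in>{1..n}. in_count H V i j = 2)}"

text \<open>Weight of vertex (i,j) (spectral parameter x_i ybar_j) in the state (H,V):
  types 1,2 (left and right horizontal edges oriented differently): sigma(a^2);
  types 3,4 (horizontal right & vertical up, or horizontal left & vertical down): sigma(a z);
  types 5,6 (horizontal left & vertical up, or horizontal right & vertical down): sigma(a zbar).\<close>
definition vweight :: "complex \<Rightarrow> (nat \<times> nat \<Rightarrow> bool) \<Rightarrow> (nat \<times> nat \<Rightarrow> bool) \<Rightarrow> nat \<Rightarrow> nat \<Rightarrow> lpoly" where
  "vweight a H V i j =
     (if H (i, j - 1) \<noteq> H (i, j) then lconst (sigma (a^2))
      else if H (i, j) = V (i, j) then sig_az a i j
      else sig_azbar a i j)"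

definition Zpf :: "complex \<Rightarrow> nat \<Rightarrow> lpoly" where
  "Zpf a n = (\<Sum>(H, V)\<in>dw_states n. \<Prod>i\<in>{1..n}. \<Prod>j\<in>{1..n}. vweight a H V i j)"

definition Ztilde :: "complex \<Rightarrow> nat \<Rightarrow> lpoly" where
  "Ztilde a n = (\<Prod>i\<in>{1..n}. xpow i (int n - 1) * ypow i (int n - 1)) * Zpf a n"

definition select_part :: "nat \<Rightarrow> lpoly \<Rightarrow> lpoly" where
  "select_part n P = Poly_Mapping.mapp
     (\<lambda>m c. if (\<forall>i\<in>{1..n-1}. Poly_Mapping.lookup m (X i) = 2 * (int n - 1) \<and> Poly_Mapping.lookup m (Y i) = 0)
            then c else 0) P"

end

theory Submission
  imports Defs "HOL-Combinatorics.Multiset_Permutations"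
begin

text \<open>Grade Laurent monomials by ldeg, the sum over i < n of the exponent of x_i minus that
  of y_i. The selected monomials have degree 2(n-1)^2, and this is the largest degree occurring in
  Ztilde: the weight of a vertex has a constant leading term at a turn (types 1 and 2), and a
  leading term of degree [i < n] + [j < n] at any other vertex (i, j), while every row and every
  column of a domain-wall state contains a turn. Hence only the states with exactly one turn per
  row and column contribute, that is the permutation matrices, and only through the product of the
  leading terms, except at the ungraded corner (n, n), which keeps its full weight
  sigma(a x_n / y_n). The leading coefficient of the state of a permutation is sigma(a^2)^n times
  a factor a^2 or a^(-2) for every pair of rows, according to whether the pair is an inversion;
  summing over all permutations gives a q-factorial, and sigma(a^2) [k]_q = sigma(a^(2k)).\<close>

lemma lconst_mult: "lconst (c * d) = lconst c * lconst d"
  by (simp add: lconst_def mult_single)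

lemma lconst_add: "lconst (c + d) = lconst c + lconst d"
  by (simp add: lconst_def single_add)

lemma lconst_0 [simp]: "lconst 0 = 0"
  by (simp add: lconst_def)

lemma lconst_1 [simp]: "lconst 1 = 1"
  by (simp add: lconst_def)

lemma lconst_sum: "lconst (\<Sum>x\<in>A. f x) = (\<Sum>x\<in>A. lconst (f x))"
  by (induction A rule: infinite_finite_induct) (simp_all add: lconst_add)

lemma lconst_prod: "lconst (\<Prod>x\<in>A. f x) = (\<Prod>x\<in>A. lconst (f x))"
  by (induction A rule: infinite_finite_induct) (simp_all add: lconst_mult)

lemma xpow_add: "xpow i e * xpow i f = xpow i (e + f)"
  unfolding xpow_def mult_single single_add[symmetric] by simp

lemma ypow_add: "ypow i e * ypow i f = ypow i (e + f)"
  unfolding ypow_def mult_single single_add[symmetric] by simp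

lemma xpow_0 [simp]: "xpow i 0 = 1"
  by (simp add: xpow_def)

lemma ypow_0 [simp]: "ypow i 0 = 1"
  by (simp add: ypow_def)

lemma xpow_power: "xpow i e ^ k = xpow i (int k * e)"
  by (induction k) (simp_all add: xpow_add algebra_simps)

lemma ypow_power: "ypow i e ^ k = ypow i (int k * e)"
  by (induction k) (simp_all add: ypow_add algebra_simps)

lemma lconst_xpow_ypow:
  "lconst c * xpow i e * ypow j f = Poly_Mapping.single (Poly_Mapping.single (X i) e + Poly_Mapping.single (Y j) f) c"
  by (simp add: lconst_def xpow_def ypow_def mult_single)

lemma prod_xpow:
  assumes "finite S"
  shows "(\<Prod>i\<in>S. xpow i (e i)) = Poly_Mapping.single (\<Sum>i\<in>S. Poly_Mapping.single (X i) (e i)) 1"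
  using assms by (induction S rule: finite_induct) (simp_all add: xpow_def mult_single)

section \<open>A grading that detects the selected monomials\<close>

definition ldeg :: "nat \<Rightarrow> (var \<Rightarrow>\<^sub>0 int) \<Rightarrow> int" where
  "ldeg n m = (\<Sum>i\<in>{1..n-1}. Poly_Mapping.lookup m (X i) - Poly_Mapping.lookup m (Y i))"

lemma ldeg_add: "ldeg n (m1 + m2) = ldeg n m1 + ldeg n m2"
  by (simp add: ldeg_def lookup_add sum.distrib[symmetric] algebra_simps)

lemma ldeg_0 [simp]: "ldeg n 0 = 0"
  by (simp add: ldeg_def)

lemma ldeg_X_Y:
  assumes "i \<in> {1..n}" "j \<in> {1..n}"
  shows "ldeg n (Poly_Mapping.single (X i) e + Poly_Mapping.single (Y j) f) = of_bool (i < n) * e - of_bool (j < n) * f"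
proof -
  have "ldeg n (Poly_Mapping.single (X i) e + Poly_Mapping.single (Y j) f)
      = (\<Sum>k\<in>{1..n-1}. (if i = k then e else 0) - (if j = k then f else 0))"
    unfolding ldeg_def by (intro sum.cong refl) (simp add: lookup_add lookup_single when_def)
  also have "\<dots> = of_bool (i < n) * e - of_bool (j < n) * f"
    using assms by (auto simp: sum_subtractf)
  finally show ?thesis .
qed

definition deg_le :: "nat \<Rightarrow> lpoly \<Rightarrow> int \<Rightarrow> bool" where
  "deg_le n P d \<longleftrightarrow> (\<forall>m\<in>Poly_Mapping.keys P. ldeg n m \<le> d)"

definition deg_lt :: "nat \<Rightarrow> lpoly \<Rightarrow> int \<Rightarrow> bool" where
  "deg_lt n P d \<longleftrightarrow> (\<forall>m\<in>Poly_Mapping.keys P. ldeg n m < d)"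

lemma keys_diff_subset: "Poly_Mapping.keys (P - Q) \<subseteq> Poly_Mapping.keys P \<union> Poly_Mapping.keys (Q::lpoly)"
  by (auto simp: in_keys_iff lookup_minus)

lemma deg_le_1: "deg_le n 1 0"
  by (simp add: deg_le_def)

lemma deg_lt_0: "deg_lt n 0 d"
  by (simp add: deg_lt_def)

lemma deg_le_single: "ldeg n m \<le> d \<Longrightarrow> deg_le n (Poly_Mapping.single m c) d"
  by (simp add: deg_le_def)

lemma deg_lt_single: "ldeg n m < d \<Longrightarrow> deg_lt n (Poly_Mapping.single m c) d"
  by (simp add: deg_lt_def)

lemma deg_lt_imp_le: "deg_lt n P d \<Longrightarrow> deg_le n P d"
  by (auto simp: deg_lt_def deg_le_def)

lemma deg_le_less_trans: "deg_le n P d \<Longrightarrow> d < d' \<Longrightarrow> deg_lt n P d'"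
  by (auto simp: deg_lt_def deg_le_def)

lemma deg_le_add: "deg_le n P d \<Longrightarrow> deg_le n Q d \<Longrightarrow> deg_le n (P + Q) d"
  unfolding deg_le_def using keys_add[of P Q] by blast

lemma deg_lt_add: "deg_lt n P d \<Longrightarrow> deg_lt n Q d \<Longrightarrow> deg_lt n (P + Q) d"
  unfolding deg_lt_def using keys_add[of P Q] by blast

lemma deg_le_diff: "deg_le n P d \<Longrightarrow> deg_le n Q d \<Longrightarrow> deg_le n (P - Q) d"
  unfolding deg_le_def using keys_diff_subset[of P Q] by blast

lemma deg_le_mult: "deg_le n P d1 \<Longrightarrow> deg_le n Q d2 \<Longrightarrow> deg_le n (P * Q) (d1 + d2)"
  unfolding deg_le_def using keys_mult[of P Q] by (force simp: ldeg_add intro: add_mono)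

lemma deg_lt_mult_left: "deg_lt n P d1 \<Longrightarrow> deg_le n Q d2 \<Longrightarrow> deg_lt n (P * Q) (d1 + d2)"
  unfolding deg_le_def deg_lt_def using keys_mult[of P Q] by (force simp: ldeg_add intro: add_less_le_mono)

lemma deg_lt_mult_right: "deg_le n P d1 \<Longrightarrow> deg_lt n Q d2 \<Longrightarrow> deg_lt n (P * Q) (d1 + d2)"
  unfolding deg_le_def deg_lt_def using keys_mult[of P Q] by (force simp: ldeg_add intro: add_le_less_mono)

lemma deg_le_prod:
  assumes "finite S" "\<And>v. v \<in> S \<Longrightarrow> deg_le n (f v) (d v)"
  shows "deg_le n (\<Prod>v\<in>S. f v) (\<Sum>v\<in>S. d v)"
  using assms by (induction S rule: finite_induct) (simp_all add: deg_le_1 deg_le_mult)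

lemma deg_lt_prod_diff:
  assumes "finite S" "\<And>v. v \<in> S \<Longrightarrow> deg_le n (t v) (d v)" "\<And>v. v \<in> S \<Longrightarrow> deg_lt n (f v - t v) (d v)"
  shows "deg_lt n ((\<Prod>v\<in>S. f v) - (\<Prod>v\<in>S. t v)) (\<Sum>v\<in>S. d v)"
  using assms
proof (induction S rule: finite_induct)
  case empty
  then show ?case by (simp add: deg_lt_0)
next
  case (insert v S)
  let ?F = "\<Prod>v\<in>S. f v" and ?T = "\<Prod>v\<in>S. t v"
  have T: "deg_le n ?T (sum d S)" using insert by (intro deg_le_prod) auto
  have FT: "deg_lt n (?F - ?T) (sum d S)" using insert by auto
  have F: "deg_le n ?F (sum d S)"
    using deg_le_add[OF T deg_lt_imp_le[OF FT]] by simp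
  have "f v * ?F - t v * ?T = (f v - t v) * ?F + t v * (?F - ?T)"
    by (simp add: algebra_simps)
  moreover have "deg_lt n ((f v - t v) * ?F + t v * (?F - ?T)) (d v + sum d S)"
    using insert.prems by (intro deg_lt_add deg_lt_mult_left[OF _ F] deg_lt_mult_right[OF _ FT]) auto
  ultimately show ?case using insert by simp
qed

definition selected :: "nat \<Rightarrow> (var \<Rightarrow>\<^sub>0 int) \<Rightarrow> bool" where
  "selected n m \<longleftrightarrow> (\<forall>i\<in>{1..n-1}. Poly_Mapping.lookup m (X i) = 2 * (int n - 1) \<and> Poly_Mapping.lookup m (Y i) = 0)"

lemma lookup_select_part:
  "Poly_Mapping.lookup (select_part n P) m = (if selected n m then Poly_Mapping.lookup P m else 0)"
  by (auto simp: select_part_def lookup_mapp selected_def when_def in_keys_iff)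

lemma select_part_add: "select_part n (P + Q) = select_part n P + select_part n Q"
  by (rule poly_mapping_eqI) (simp add: lookup_select_part lookup_add)

lemma select_part_diff: "select_part n (P - Q) = select_part n P - select_part n Q"
  by (rule poly_mapping_eqI) (simp add: lookup_select_part lookup_minus)

lemma select_part_sum: "select_part n (\<Sum>s\<in>A. f s) = (\<Sum>s\<in>A. select_part n (f s))"
  by (rule poly_mapping_eqI) (simp add: lookup_select_part lookup_sum)

lemma select_part_single:
  "select_part n (Poly_Mapping.single m c) = (if selected n m then Poly_Mapping.single m c else 0)"
  by (rule poly_mapping_eqI) (simp add: lookup_select_part lookup_single when_def)

definition top_deg :: "nat \<Rightarrow> int" where
  "top_deg n = (int n - 1) * (2 * (int n - 1))"

lemma ldeg_selected:
  assumes "n \<ge> 1" "selected n m"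
  shows "ldeg n m = top_deg n"
proof -
  have "ldeg n m = (\<Sum>i\<in>{1..n-1}. 2 * (int n - 1))"
    unfolding ldeg_def using assms(2) by (intro sum.cong) (auto simp: selected_def)
  also have "\<dots> = top_deg n" using assms(1) by (simp add: top_deg_def of_nat_diff)
  finally show ?thesis .
qed

lemma select_part_eq_0_if_deg_lt:
  assumes "n \<ge> 1" "deg_lt n P (top_deg n)"
  shows "select_part n P = 0"
  by (rule poly_mapping_eqI)
     (use assms ldeg_selected[OF assms(1)] in \<open>force simp: lookup_select_part deg_lt_def in_keys_iff\<close>)

section \<open>Turns of a domain-wall state\<close>

text \<open>Turns are the vertices of types 1 and 2, where the horizontal arrow reverses.\<close>
definition is_turn :: "(nat \<times> nat \<Rightarrow> bool) \<Rightarrow> nat \<Rightarrow> nat \<Rightarrow> bool" where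
  "is_turn H i j \<longleftrightarrow> H (i, j - 1) \<noteq> H (i, j)"

definition row_turns :: "(nat \<times> nat \<Rightarrow> bool) \<Rightarrow> nat \<Rightarrow> nat \<Rightarrow> nat set" where
  "row_turns H n i = {j\<in>{1..n}. is_turn H i j}"

definition col_turns :: "(nat \<times> nat \<Rightarrow> bool) \<Rightarrow> nat \<Rightarrow> nat \<Rightarrow> nat set" where
  "col_turns H n j = {i\<in>{1..n}. is_turn H i j}"

lemma in_count_2_flux:
  assumes "in_count H V i j = 2"
  shows "(of_bool (H (i, j - 1)) - of_bool (H (i, j)) :: int) = of_bool (V (i - 1, j)) - of_bool (V (i, j))"
  using assms unfolding in_count_def
  by (cases "H (i, j - 1)"; cases "H (i, j)"; cases "V (i - 1, j)"; cases "V (i, j)") simp_all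

lemma is_turn_iff_vertical:
  assumes "in_count H V i j = 2"
  shows "is_turn H i j \<longleftrightarrow> V (i - 1, j) \<noteq> V (i, j)"
  using assms unfolding in_count_def is_turn_def
  by (cases "H (i, j - 1)"; cases "H (i, j)"; cases "V (i - 1, j)"; cases "V (i, j)") simp_all

lemma dw_statesD:
  assumes "(H, V) \<in> dw_states n"
  shows "\<And>i. i \<in> {1..n} \<Longrightarrow> H (i, 0)" "\<And>i. i \<in> {1..n} \<Longrightarrow> \<not> H (i, n)"
    "\<And>j. j \<in> {1..n} \<Longrightarrow> V (0, j)" "\<And>j. j \<in> {1..n} \<Longrightarrow> \<not> V (n, j)"
    "\<And>i j. i \<in> {1..n} \<Longrightarrow> j \<in> {1..n} \<Longrightarrow> in_count H V i j = 2"
    "H \<in> hedges n \<rightarrow>\<^sub>E (UNIV :: bool set)" "V \<in> vedges n \<rightarrow>\<^sub>E (UNIV :: bool set)"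
  using assms by (auto simp: dw_states_def)

lemma finite_dw_states: "finite (dw_states n)"
proof (rule finite_subset)
  show "dw_states n \<subseteq> (hedges n \<rightarrow>\<^sub>E (UNIV :: bool set)) \<times> (vedges n \<rightarrow>\<^sub>E (UNIV :: bool set))"
    by (auto simp: dw_states_def)
  show "finite ((hedges n \<rightarrow>\<^sub>E (UNIV :: bool set)) \<times> (vedges n \<rightarrow>\<^sub>E (UNIV :: bool set)))"
    by (intro finite_cartesian_product finite_PiE) (auto simp: hedges_def vedges_def)
qed

lemma ex_change: "(f (0::nat) :: bool) \<noteq> f n \<Longrightarrow> \<exists>j\<in>{1..n}. f (j - 1) \<noteq> f j"
proof (induction n)
  case (Suc n)
  then show ?case by (cases "f n = f (Suc n)") (auto intro: bexI[of _ "Suc n"])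
qed simp

lemma sum_telescope_down: "(\<Sum>j\<in>{1..n::nat}. (g (j - 1) - g j :: int)) = g 0 - g n"
  by (induction n) (auto simp: atLeastAtMostSuc_conv)

lemma row_turns_nonempty:
  assumes "(H, V) \<in> dw_states n" "i \<in> {1..n}"
  shows "row_turns H n i \<noteq> {}"
proof -
  have "H (i, 0) \<noteq> H (i, n)" using dw_statesD[OF assms(1)] assms(2) by auto
  then obtain j where "j \<in> {1..n}" "H (i, j - 1) \<noteq> H (i, j)"
    using ex_change[of "\<lambda>j. H (i, j)" n] by blast
  then show ?thesis by (auto simp: row_turns_def is_turn_def)
qed

lemma col_turns_nonempty:
  assumes "(H, V) \<in> dw_states n" "j \<in> {1..n}"
  shows "col_turns H n j \<noteq> {}"
proof -
  have "V (0, j) \<noteq> V (n, j)" using dw_statesD[OF assms(1)] assms(2) by auto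
  then obtain i where i: "i \<in> {1..n}" "V (i - 1, j) \<noteq> V (i, j)"
    using ex_change[of "\<lambda>i. V (i, j)" n] by blast
  then have "is_turn H i j" using is_turn_iff_vertical[OF dw_statesD(5)[OF assms(1) i(1) assms(2)]] by simp
  then show ?thesis using i by (auto simp: col_turns_def)
qed

lemma count_up_arrows:
  assumes "(H, V) \<in> dw_states n" "i \<le> n"
  shows "(\<Sum>j\<in>{1..n}. of_bool (V (i, j)) :: int) = int n - int i"
  using assms(2)
proof (induction i)
  case 0
  have "(\<Sum>j\<in>{1..n}. of_bool (V (0, j)) :: int) = (\<Sum>j\<in>{1..n}. 1)"
    using dw_statesD(3)[OF assms(1)] by (intro sum.cong) auto
  then show ?case by simp
next
  case (Suc i)
  have "(\<Sum>j\<in>{1..n}. of_bool (V (i, j)) :: int) - (\<Sum>j\<in>{1..n}. of_bool (V (Suc i, j)))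
      = (\<Sum>j\<in>{1..n}. of_bool (V (Suc i - 1, j)) - of_bool (V (Suc i, j)))"
    by (simp add: sum_subtractf)
  also have "\<dots> = (\<Sum>j\<in>{1..n}. of_bool (H (Suc i, j - 1)) - of_bool (H (Suc i, j)))"
  proof (intro sum.cong refl)
    fix j assume "j \<in> {1..n}"
    then show "of_bool (V (Suc i - 1, j)) - of_bool (V (Suc i, j)) = (of_bool (H (Suc i, j - 1)) - of_bool (H (Suc i, j)) :: int)"
      by (rule in_count_2_flux[OF dw_statesD(5)[OF assms(1)], symmetric, rotated]) (use Suc.prems in auto)
  qed
  also have "\<dots> = 1"
    using sum_telescope_down[of "\<lambda>j. of_bool (H (Suc i, j))" n] dw_statesD(1,2)[OF assms(1), of "Suc i"] Suc.prems
    by simp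
  finally show ?case using Suc by simp
qed

lemma count_right_arrows:
  assumes "(H, V) \<in> dw_states n" "j \<le> n"
  shows "(\<Sum>i\<in>{1..n}. of_bool (H (i, j)) :: int) = int n - int j"
  using assms(2)
proof (induction j)
  case 0
  have "(\<Sum>i\<in>{1..n}. of_bool (H (i, 0)) :: int) = (\<Sum>i\<in>{1..n}. 1)"
    using dw_statesD(1)[OF assms(1)] by (intro sum.cong) auto
  then show ?case by simp
next
  case (Suc j)
  have "(\<Sum>i\<in>{1..n}. of_bool (H (i, j)) :: int) - (\<Sum>i\<in>{1..n}. of_bool (H (i, Suc j)))
      = (\<Sum>i\<in>{1..n}. of_bool (H (i, Suc j - 1)) - of_bool (H (i, Suc j)))"
    by (simp add: sum_subtractf)
  also have "\<dots> = (\<Sum>i\<in>{1..n}. of_bool (V (i - 1, Suc j)) - of_bool (V (i, Suc j)))"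
  proof (intro sum.cong refl)
    fix i assume "i \<in> {1..n}"
    then show "of_bool (H (i, Suc j - 1)) - of_bool (H (i, Suc j)) = (of_bool (V (i - 1, Suc j)) - of_bool (V (i, Suc j)) :: int)"
      by (rule in_count_2_flux[OF dw_statesD(5)[OF assms(1)]]) (use Suc.prems in auto)
  qed
  also have "\<dots> = 1"
    using sum_telescope_down[of "\<lambda>i. of_bool (V (i, Suc j))" n] dw_statesD(3,4)[OF assms(1), of "Suc j"] Suc.prems
    by simp
  finally show ?case using Suc by simp
qed

lemma card_row_turns_last:
  assumes "(H, V) \<in> dw_states n" "n \<ge> 1"
  shows "card (row_turns H n n) = 1"
proof -
  have "row_turns H n n = {1..n} \<inter> {j. V (n - 1, j)}"
    using is_turn_iff_vertical[OF dw_statesD(5)[OF assms(1)]] dw_statesD(4)[OF assms(1)] assms(2)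
    by (auto simp: row_turns_def)
  moreover have "(\<Sum>j\<in>{1..n}. of_bool (V (n - 1, j)) :: int) = 1"
    using count_up_arrows[OF assms(1), of "n - 1"] assms(2) by simp
  ultimately show ?thesis by simp
qed

lemma card_col_turns_last:
  assumes "(H, V) \<in> dw_states n" "n \<ge> 1"
  shows "card (col_turns H n n) = 1"
proof -
  have "col_turns H n n = {1..n} \<inter> {i. H (i, n - 1)}"
    using dw_statesD(2)[OF assms(1)] by (auto simp: col_turns_def is_turn_def)
  moreover have "(\<Sum>i\<in>{1..n}. of_bool (H (i, n - 1)) :: int) = 1"
    using count_right_arrows[OF assms(1), of "n - 1"] assms(2) by simp
  ultimately show ?thesis by simp
qed

text \<open>The degree of the leading term of the weight of vertex (i, j): a turn has constant weight,
  any other vertex contributes monomials x_i^(+-1) y_j^(-+1), which are graded only for i, j < n.\<close>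
definition vdeg :: "nat \<Rightarrow> (nat \<times> nat \<Rightarrow> bool) \<Rightarrow> nat \<Rightarrow> nat \<Rightarrow> int" where
  "vdeg n H i j = (if is_turn H i j then 0 else of_bool (i < n) + of_bool (j < n))"

lemma sum_of_bool_less:
  fixes f :: "nat \<Rightarrow> int"
  shows "(\<Sum>i\<in>{1..n}. of_bool (i < n) * f i) = (\<Sum>i\<in>{1..n-1}. f i)"
  by (rule sum.mono_neutral_cong_right) auto

lemma sum_eq_sum_iff_pointwise:
  fixes f g :: "'a \<Rightarrow> int"
  assumes "finite A" "\<And>x. x \<in> A \<Longrightarrow> f x \<le> g x"
  shows "sum f A = sum g A \<longleftrightarrow> (\<forall>x\<in>A. f x = g x)"
  using sum_mono_inv[of f A g] assms by (auto intro: sum.cong)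

lemma sum_vdeg:
  "(\<Sum>i\<in>{1..n}. \<Sum>j\<in>{1..n}. vdeg n H i j)
     = (\<Sum>i\<in>{1..n-1}. int n - int (card (row_turns H n i)))
     + (\<Sum>j\<in>{1..n-1}. int n - int (card (col_turns H n j)))"
proof -
  have row: "(\<Sum>j\<in>{1..n}. of_bool (\<not> is_turn H i j) :: int) = int n - int (card (row_turns H n i))" for i
    by (simp add: row_turns_def of_bool_not_iff sum_subtractf Int_def)
  have col: "(\<Sum>i\<in>{1..n}. of_bool (\<not> is_turn H i j) :: int) = int n - int (card (col_turns H n j))" for j
    by (simp add: col_turns_def of_bool_not_iff sum_subtractf Int_def)
  have "vdeg n H i j = of_bool (i < n) * of_bool (\<not> is_turn H i j) + of_bool (j < n) * of_bool (\<not> is_turn H i j)"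
    for i j by (simp add: vdeg_def)
  then have "(\<Sum>i\<in>{1..n}. \<Sum>j\<in>{1..n}. vdeg n H i j)
      = (\<Sum>i\<in>{1..n}. \<Sum>j\<in>{1..n}. of_bool (i < n) * of_bool (\<not> is_turn H i j))
      + (\<Sum>i\<in>{1..n}. \<Sum>j\<in>{1..n}. of_bool (j < n) * of_bool (\<not> is_turn H i j))"
    by (simp only: sum.distrib)
  also have "(\<Sum>i\<in>{1..n}. \<Sum>j\<in>{1..n}. of_bool (i < n) * of_bool (\<not> is_turn H i j))
      = (\<Sum>i\<in>{1..n-1}. int n - int (card (row_turns H n i)))"
    by (simp only: sum_distrib_left[symmetric] sum_of_bool_less row)
  also have "(\<Sum>i\<in>{1..n}. \<Sum>j\<in>{1..n}. of_bool (j < n) * of_bool (\<not> is_turn H i j))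
      = (\<Sum>j\<in>{1..n}. \<Sum>i\<in>{1..n}. of_bool (j < n) * of_bool (\<not> is_turn H i j) :: int)"
    by (rule sum.swap)
  also have "\<dots> = (\<Sum>j\<in>{1..n-1}. int n - int (card (col_turns H n j)))"
    by (simp only: sum_distrib_left[symmetric] sum_of_bool_less col)
  finally show ?thesis .
qed

definition perm_states :: "nat \<Rightarrow> ((nat \<times> nat \<Rightarrow> bool) \<times> (nat \<times> nat \<Rightarrow> bool)) set" where
  "perm_states n = {(H, V) \<in> dw_states n.
     (\<forall>i\<in>{1..n}. card (row_turns H n i) = 1) \<and> (\<forall>j\<in>{1..n}. card (col_turns H n j) = 1)}"

text \<open>Every row and column contains a turn, so each of the two sums in sum_vdeg is at most
  (n - 1)^2, with equality exactly when the state has one turn per line.\<close>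
lemma sum_vdeg_le_top_deg:
  assumes "(H, V) \<in> dw_states n" "n \<ge> 1"
  shows "(\<Sum>i\<in>{1..n}. \<Sum>j\<in>{1..n}. vdeg n H i j) \<le> top_deg n"
    and "(\<Sum>i\<in>{1..n}. \<Sum>j\<in>{1..n}. vdeg n H i j) = top_deg n \<longleftrightarrow> (H, V) \<in> perm_states n"
proof -
  let ?r = "\<lambda>i. int n - int (card (row_turns H n i))" and ?c = "\<lambda>j. int n - int (card (col_turns H n j))"
  have r: "?r i \<le> int n - 1" if "i \<in> {1..n}" for i
    using row_turns_nonempty[OF assms(1) that] by (simp add: row_turns_def Suc_le_eq card_gt_0_iff)
  have c: "?c j \<le> int n - 1" if "j \<in> {1..n}" for j
    using col_turns_nonempty[OF assms(1) that] by (simp add: col_turns_def Suc_le_eq card_gt_0_iff)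
  have top: "top_deg n = (\<Sum>i\<in>{1..n-1}. int n - 1) + (\<Sum>j\<in>{1..n-1}. int n - 1)"
    using assms(2) by (simp add: top_deg_def of_nat_diff algebra_simps)
  have sr: "sum ?r {1..n-1} \<le> (\<Sum>i\<in>{1..n-1}. int n - 1)"
    by (rule sum_mono, rule r) auto
  have sc: "sum ?c {1..n-1} \<le> (\<Sum>j\<in>{1..n-1}. int n - 1)"
    by (rule sum_mono, rule c) auto
  show "(\<Sum>i\<in>{1..n}. \<Sum>j\<in>{1..n}. vdeg n H i j) \<le> top_deg n"
    unfolding sum_vdeg top using sr sc by linarith
  have "(\<Sum>i\<in>{1..n}. \<Sum>j\<in>{1..n}. vdeg n H i j) = top_deg n
      \<longleftrightarrow> sum ?r {1..n-1} = (\<Sum>i\<in>{1..n-1}. int n - 1) \<and> sum ?c {1..n-1} = (\<Sum>j\<in>{1..n-1}. int n - 1)"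
    unfolding sum_vdeg top using sr sc by linarith
  also have "\<dots> \<longleftrightarrow> (\<forall>i\<in>{1..n-1}. ?r i = int n - 1) \<and> (\<forall>j\<in>{1..n-1}. ?c j = int n - 1)"
  proof -
    have "i \<in> {1..n-1} \<Longrightarrow> ?r i \<le> int n - 1" "i \<in> {1..n-1} \<Longrightarrow> ?c i \<le> int n - 1" for i
      using r c by auto
    then show ?thesis by (simp only: sum_eq_sum_iff_pointwise[OF finite_atLeastAtMost])
  qed
  also have "\<dots> \<longleftrightarrow> (H, V) \<in> perm_states n"
  proof -
    have "i \<in> {1..n} \<longleftrightarrow> i \<in> {1..n-1} \<or> i = n" for i using assms(2) by auto
    then show ?thesis
      using assms card_row_turns_last[OF assms] card_col_turns_last[OF assms]
      by (auto simp: perm_states_def)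
  qed
  finally show "(\<Sum>i\<in>{1..n}. \<Sum>j\<in>{1..n}. vdeg n H i j) = top_deg n \<longleftrightarrow> (H, V) \<in> perm_states n" .
qed

section \<open>States with one turn per row and column\<close>

text \<open>A permutation is encoded by the list of the columns of the turns read from the bottom
  row n up to row 1, so that consing a column to the list adds a new bottom row.\<close>
definition turn_col :: "nat list \<Rightarrow> nat \<Rightarrow> nat" where
  "turn_col xs i = xs ! (length xs - i)"

lemma length_perm: "xs \<in> permutations_of_set {1..n} \<Longrightarrow> length xs = n"
  by (simp add: length_finite_permutations_of_set)

lemma turn_col_Cons: "1 \<le> i \<Longrightarrow> i \<le> length xs \<Longrightarrow> turn_col (p # xs) i = turn_col xs i"
  by (simp add: turn_col_def Suc_diff_le)

lemma turn_col_in_set: "1 \<le> i \<Longrightarrow> i \<le> length xs \<Longrightarrow> turn_col xs i \<in> set xs"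
  by (simp add: turn_col_def)

lemma bij_betw_turn_col:
  assumes "distinct xs"
  shows "bij_betw (turn_col xs) {1..length xs} (set xs)"
proof -
  let ?m = "length xs"
  have "bij_betw (\<lambda>i. ?m - i) {1..?m} {..<?m}"
    by (rule bij_betw_byWitness[where f'="\<lambda>k. ?m - k"]) auto
  moreover have "turn_col xs = (!) xs \<circ> (\<lambda>i. ?m - i)"
    by (auto simp: turn_col_def fun_eq_iff)
  ultimately show ?thesis
    using bij_betw_trans[OF _ bij_betw_nth[OF assms refl refl]] by simp
qed

lemma prod_turn_col:
  assumes "distinct xs"
  shows "(\<Prod>i\<in>{1..length xs}. f (turn_col xs i)) = (\<Prod>j\<in>set xs. f j)"
  using prod.reindex_bij_betw[OF bij_betw_turn_col[OF assms]] .

lemma bij_betw_turn_col_perm: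
  assumes "xs \<in> permutations_of_set {1..n}"
  shows "bij_betw (turn_col xs) {1..n} {1..n}"
  using bij_betw_turn_col[of xs] length_perm[OF assms] permutations_of_setD[OF assms] by simp

lemma turn_col_range: "xs \<in> permutations_of_set {1..n} \<Longrightarrow> i \<in> {1..n} \<Longrightarrow> turn_col xs i \<in> {1..n}"
  using bij_betw_turn_col_perm bij_betwE by blast

lemma set_drop_turn_col:
  assumes "distinct xs" "length xs = n" "i \<in> {1..n}"
  shows "set (drop (n - i) xs) = insert (turn_col xs i) (set (drop (n - (i - 1)) xs))"
    and "turn_col xs i \<notin> set (drop (n - (i - 1)) xs)"
proof -
  have e: "drop (n - i) xs = xs ! (n - i) # drop (n - (i - 1)) xs"
    using Cons_nth_drop_Suc[of "n - i" xs] assms by (simp add: Suc_diff_le)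
  show "set (drop (n - i) xs) = insert (turn_col xs i) (set (drop (n - (i - 1)) xs))"
    using e assms(2) by (simp add: turn_col_def)
  have "distinct (drop (n - i) xs)" using assms(1) by simp
  then show "turn_col xs i \<notin> set (drop (n - (i - 1)) xs)"
    using e assms(2) by (simp add: turn_col_def)
qed

text \<open>drop (n - i) xs lists the turn columns of the rows i, ..., 1; below row i the vertical
  arrows of exactly these columns point down.\<close>
definition perm_H :: "nat \<Rightarrow> nat list \<Rightarrow> nat \<times> nat \<Rightarrow> bool" where
  "perm_H n xs = restrict (\<lambda>(i, j). j < turn_col xs i) (hedges n)"

definition perm_V :: "nat \<Rightarrow> nat list \<Rightarrow> nat \<times> nat \<Rightarrow> bool" where
  "perm_V n xs = restrict (\<lambda>(i, j). j \<notin> set (drop (n - i) xs)) (vedges n)"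

lemma is_turn_perm_H:
  assumes "xs \<in> permutations_of_set {1..n}" "i \<in> {1..n}" "j \<in> {1..n}"
  shows "is_turn (perm_H n xs) i j \<longleftrightarrow> j = turn_col xs i"
proof -
  have "(i, j - 1) \<in> hedges n" "(i, j) \<in> hedges n" using assms(2,3) by (auto simp: hedges_def)
  then show ?thesis
    using turn_col_range[OF assms(1,2)] assms(3) by (auto simp: is_turn_def perm_H_def)
qed

lemma perm_state_in_dw_states:
  assumes "xs \<in> permutations_of_set {1..n}"
  shows "(perm_H n xs, perm_V n xs) \<in> dw_states n"
proof -
  have ic: "in_count (perm_H n xs) (perm_V n xs) i j = 2" if ij: "i \<in> {1..n}" "j \<in> {1..n}" for i j
  proof -
    define p where "p = turn_col xs i"
    define D where "D = set (drop (n - (i - 1)) xs)"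
    have DS: "set (drop (n - i) xs) = insert p D" "p \<notin> D"
      using set_drop_turn_col[OF _ length_perm[OF assms] ij(1)] permutations_of_setD[OF assms]
      by (simp_all add: p_def D_def)
    have p1: "p \<ge> 1" using turn_col_range[OF assms ij(1)] by (simp add: p_def)
    have "(i, j - 1) \<in> hedges n" "(i, j) \<in> hedges n" "(i - 1, j) \<in> vedges n" "(i, j) \<in> vedges n"
      using ij by (auto simp: hedges_def vedges_def)
    then have "perm_H n xs (i, j - 1) = (j - 1 < p)" "perm_H n xs (i, j) = (j < p)"
      "perm_V n xs (i - 1, j) = (j \<notin> D)" "perm_V n xs (i, j) = (j \<notin> insert p D)"
      using DS(1) by (simp_all add: perm_H_def perm_V_def p_def D_def)
    then show ?thesis
      unfolding in_count_def using DS(2) p1 ij(2) by (cases "j < p"; cases "j = p") auto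
  qed
  show ?thesis
    unfolding dw_states_def
  proof (intro CollectI, unfold case_prod_conv, intro conjI)
    show "perm_H n xs \<in> hedges n \<rightarrow>\<^sub>E UNIV" "perm_V n xs \<in> vedges n \<rightarrow>\<^sub>E UNIV"
      by (simp_all add: perm_H_def perm_V_def)
    show "\<forall>i\<in>{1..n}. perm_H n xs (i, 0) \<and> \<not> perm_H n xs (i, n)"
      using turn_col_range[OF assms] by (force simp: perm_H_def hedges_def)
    show "\<forall>j\<in>{1..n}. perm_V n xs (0, j) \<and> \<not> perm_V n xs (n, j)"
      using permutations_of_setD[OF assms] length_perm[OF assms] by (auto simp: perm_V_def vedges_def)
  qed (use ic in blast)
qed

lemma perm_state_in_perm_states:
  assumes "xs \<in> permutations_of_set {1..n}"
  shows "(perm_H n xs, perm_V n xs) \<in> perm_states n"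
proof -
  note b = bij_betw_turn_col_perm[OF assms]
  have "card (row_turns (perm_H n xs) n i) = 1" if "i \<in> {1..n}" for i
  proof -
    have "row_turns (perm_H n xs) n i = {turn_col xs i}"
      using is_turn_perm_H[OF assms that] turn_col_range[OF assms that] by (auto simp: row_turns_def)
    then show ?thesis by simp
  qed
  moreover have "card (col_turns (perm_H n xs) n j) = 1" if j: "j \<in> {1..n}" for j
  proof -
    have "j \<in> turn_col xs ` {1..n}" using b j by (simp add: bij_betw_def)
    then obtain i0 where i0: "i0 \<in> {1..n}" "turn_col xs i0 = j" by blast
    have "col_turns (perm_H n xs) n j = {i\<in>{1..n}. turn_col xs i = j}"
      using is_turn_perm_H[OF assms _ j] by (auto simp: col_turns_def)
    also have "\<dots> = {i0}"
      using i0 bij_betw_imp_inj_on[OF b] by (auto dest: inj_onD)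
    finally show ?thesis by simp
  qed
  ultimately show ?thesis using perm_state_in_dw_states[OF assms] by (simp add: perm_states_def)
qed

definition turn_of_row :: "(nat \<times> nat \<Rightarrow> bool) \<Rightarrow> nat \<Rightarrow> nat \<Rightarrow> nat" where
  "turn_of_row H n i = (THE j. j \<in> {1..n} \<and> is_turn H i j)"

definition perm_of_state :: "nat \<Rightarrow> (nat \<times> nat \<Rightarrow> bool) \<Rightarrow> nat list" where
  "perm_of_state n H = map (turn_of_row H n) (rev [1..<Suc n])"

lemma turn_col_perm_of_state: "i \<in> {1..n} \<Longrightarrow> turn_col (perm_of_state n H) i = turn_of_row H n i"
  by (auto simp: turn_col_def perm_of_state_def rev_nth nth_upt simp del: upt_Suc)

lemma turn_of_row_perm_H:
  assumes "xs \<in> permutations_of_set {1..n}" "i \<in> {1..n}"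
  shows "turn_of_row (perm_H n xs) n i = turn_col xs i"
  unfolding turn_of_row_def
  using is_turn_perm_H[OF assms] turn_col_range[OF assms] by (intro the_equality) auto

lemma perm_of_state_perm_H:
  assumes "xs \<in> permutations_of_set {1..n}"
  shows "perm_of_state n (perm_H n xs) = xs"
proof (rule nth_equalityI)
  show "length (perm_of_state n (perm_H n xs)) = length xs"
    by (simp add: perm_of_state_def length_perm[OF assms])
  fix k assume "k < length (perm_of_state n (perm_H n xs))"
  then have k: "k < n" by (simp add: perm_of_state_def del: upt_Suc)
  then have "perm_of_state n (perm_H n xs) ! k = turn_col xs (n - k)"
    using turn_of_row_perm_H[OF assms, of "n - k"] by (simp add: perm_of_state_def rev_nth nth_upt Suc_diff_Suc del: upt_Suc)
  then show "perm_of_state n (perm_H n xs) ! k = xs ! k"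
    using k by (simp add: turn_col_def length_perm[OF assms])
qed

lemma turn_of_row_spec:
  assumes "(H, V) \<in> perm_states n" "i \<in> {1..n}"
  shows "turn_of_row H n i \<in> {1..n}" "is_turn H i (turn_of_row H n i)"
    and "\<And>j. j \<in> {1..n} \<Longrightarrow> is_turn H i j \<longleftrightarrow> j = turn_of_row H n i"
proof -
  have "card (row_turns H n i) = 1" using assms by (simp add: perm_states_def)
  then obtain x where x: "row_turns H n i = {x}" by (rule card_1_singletonE)
  then have "turn_of_row H n i = x"
    unfolding turn_of_row_def by (intro the_equality) (auto simp: row_turns_def set_eq_iff)
  then show "turn_of_row H n i \<in> {1..n}" "is_turn H i (turn_of_row H n i)"
    and "\<And>j. j \<in> {1..n} \<Longrightarrow> is_turn H i j \<longleftrightarrow> j = turn_of_row H n i"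
    using x by (auto simp: row_turns_def set_eq_iff)
qed

lemma perm_of_state_in_permutations:
  assumes "(H, V) \<in> perm_states n"
  shows "perm_of_state n H \<in> permutations_of_set {1..n}"
proof -
  have inj: "inj_on (turn_of_row H n) {1..n}"
  proof (rule inj_onI)
    fix i i' assume i: "i \<in> {1..n}" "i' \<in> {1..n}" "turn_of_row H n i = turn_of_row H n i'"
    have "card (col_turns H n (turn_of_row H n i)) = 1"
      using assms turn_of_row_spec(1)[OF assms i(1)] by (simp add: perm_states_def)
    moreover have "i \<in> col_turns H n (turn_of_row H n i)" "i' \<in> col_turns H n (turn_of_row H n i)"
      using turn_of_row_spec(2)[OF assms i(1)] turn_of_row_spec(2)[OF assms i(2)] i by (auto simp: col_turns_def)
    ultimately show "i = i'" by (auto simp: card_1_singleton_iff)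
  qed
  moreover have "turn_of_row H n ` {1..n} = {1..n}"
    using endo_inj_surj[OF _ _ inj] turn_of_row_spec(1)[OF assms] by blast
  ultimately show ?thesis
    by (simp add: perm_of_state_def permutations_of_set_def distinct_map atLeastLessThanSuc_atLeastAtMost
        del: upt_Suc)
qed

lemma perm_H_perm_of_state:
  assumes "(H, V) \<in> perm_states n"
  shows "perm_H n (perm_of_state n H) = H"
proof -
  have dw: "(H, V) \<in> dw_states n" using assms by (simp add: perm_states_def)
  have "H (i, j) = (j < turn_of_row H n i)" if i: "i \<in> {1..n}" and "j \<le> n" for i j
    using \<open>j \<le> n\<close>
  proof (induction j)
    case 0
    then show ?case using dw_statesD(1)[OF dw i] turn_of_row_spec(1)[OF assms i] by auto
  next
    case (Suc j)
    then have "H (i, j) \<noteq> H (i, Suc j) \<longleftrightarrow> Suc j = turn_of_row H n i"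
      using turn_of_row_spec(3)[OF assms i, of "Suc j"] by (simp add: is_turn_def)
    then show ?case using Suc by auto
  qed
  then show ?thesis
    using PiE_arb[OF dw_statesD(6)[OF dw]]
    by (auto simp: fun_eq_iff perm_H_def hedges_def turn_col_perm_of_state)
qed

lemma perm_V_perm_of_state:
  assumes "(H, V) \<in> perm_states n"
  shows "perm_V n (perm_of_state n H) = V"
proof -
  let ?xs = "perm_of_state n H"
  have dw: "(H, V) \<in> dw_states n" using assms by (simp add: perm_states_def)
  have xs: "distinct ?xs" "length ?xs = n"
    using permutations_of_setD(2) length_perm perm_of_state_in_permutations[OF assms] by blast+
  have "V (i, j) = (j \<notin> set (drop (n - i) ?xs))" if j: "j \<in> {1..n}" and "i \<le> n" for i j
    using \<open>i \<le> n\<close>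
  proof (induction i)
    case 0
    then show ?case using dw_statesD(3)[OF dw j] xs by simp
  next
    case (Suc i)
    then have si: "Suc i \<in> {1..n}" by simp
    have "V (i, j) \<noteq> V (Suc i, j) \<longleftrightarrow> j = turn_col ?xs (Suc i)"
      using is_turn_iff_vertical[OF dw_statesD(5)[OF dw si j]] turn_of_row_spec(3)[OF assms si j]
        turn_col_perm_of_state[OF si] by simp
    then show ?case using Suc set_drop_turn_col[OF xs si] by auto
  qed
  then show ?thesis
    using PiE_arb[OF dw_statesD(7)[OF dw]] by (auto simp: fun_eq_iff perm_V_def vedges_def)
qed

lemma bij_betw_perm_state:
  "bij_betw (\<lambda>xs. (perm_H n xs, perm_V n xs)) (permutations_of_set {1..n}) (perm_states n)"
proof (rule bij_betw_byWitness[where f'="\<lambda>s. perm_of_state n (fst s)"])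
  show "\<forall>s\<in>perm_states n. (perm_H n (perm_of_state n (fst s)), perm_V n (perm_of_state n (fst s))) = s"
    using perm_H_perm_of_state perm_V_perm_of_state by (auto simp: perm_states_def)
  show "(\<lambda>s. perm_of_state n (fst s)) ` perm_states n \<subseteq> permutations_of_set {1..n}"
    using perm_of_state_in_permutations by (auto simp: perm_states_def)
qed (auto simp: perm_of_state_perm_H perm_state_in_perm_states)

section \<open>Leading terms of the vertex weights\<close>

lemma sig_az_eq:
  "sig_az a i j = Poly_Mapping.single (Poly_Mapping.single (X i) 1 + Poly_Mapping.single (Y j) (-1)) a
     - Poly_Mapping.single (Poly_Mapping.single (X i) (-1) + Poly_Mapping.single (Y j) 1) (inverse a)"
  by (simp add: sig_az_def lconst_xpow_ypow)

lemma sig_azbar_eq: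
  "sig_azbar a i j = Poly_Mapping.single (Poly_Mapping.single (X i) (-1) + Poly_Mapping.single (Y j) 1) a
     - Poly_Mapping.single (Poly_Mapping.single (X i) 1 + Poly_Mapping.single (Y j) (-1)) (inverse a)"
  by (simp add: sig_azbar_def lconst_xpow_ypow)

text \<open>No variable is graded at the corner (n, n), so there the whole weight is kept.\<close>
definition vlead ::
    "complex \<Rightarrow> nat \<Rightarrow> (nat \<times> nat \<Rightarrow> bool) \<Rightarrow> (nat \<times> nat \<Rightarrow> bool) \<Rightarrow> nat \<Rightarrow> nat \<Rightarrow> lpoly" where
  "vlead a n H V i j =
     (if is_turn H i j then lconst (sigma (a^2))
      else if i = n \<and> j = n then vweight a H V i j
      else lconst (if H (i, j) = V (i, j) then a else - inverse a) * xpow i 1 * ypow j (-1))"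

lemma vlead_approx:
  assumes ij: "i \<in> {1..n}" "j \<in> {1..n}"
  shows "deg_le n (vlead a n H V i j) (vdeg n H i j)"
    and "deg_lt n (vweight a H V i j - vlead a n H V i j) (vdeg n H i j)"
proof -
  let ?m = "\<lambda>e. Poly_Mapping.single (X i) e + Poly_Mapping.single (Y j) (- e)"
  have deg_m: "ldeg n (?m e) = (of_bool (i < n) + of_bool (j < n)) * e" for e
    using ldeg_X_Y[OF ij, of e "- e"] by (simp add: algebra_simps)
  consider "is_turn H i j" | "\<not> is_turn H i j" "i = n" "j = n" | "\<not> is_turn H i j" "\<not> (i = n \<and> j = n)"
    by blast
  then have "deg_le n (vlead a n H V i j) (vdeg n H i j)
      \<and> deg_lt n (vweight a H V i j - vlead a n H V i j) (vdeg n H i j)"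
  proof cases
    case 1
    then show ?thesis by (simp add: vlead_def vweight_def vdeg_def is_turn_def lconst_def deg_le_single deg_lt_0)
  next
    case 2
    have "deg_le n (sig_az a i j) 0" "deg_le n (sig_azbar a i j) 0"
      unfolding sig_az_eq sig_azbar_eq using 2 deg_m[of 1] deg_m[of "-1"]
      by (auto intro!: deg_le_diff deg_le_single)
    then show ?thesis using 2 by (simp add: vlead_def vweight_def vdeg_def is_turn_def deg_lt_0)
  next
    case 3
    have d: "vdeg n H i j = of_bool (i < n) + of_bool (j < n)" "vdeg n H i j \<ge> 1"
      using 3 ij by (auto simp: vdeg_def)
    define c where "c = (if H (i, j) = V (i, j) then a else - inverse a)"
    define c' where "c' = (if H (i, j) = V (i, j) then - inverse a else a)"
    have corner: "(i = n \<and> j = n) = False" using 3 by simp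
    have l: "vlead a n H V i j = Poly_Mapping.single (?m 1) c"
      using 3 by (simp add: vlead_def corner c_def lconst_xpow_ypow)
    moreover have "vweight a H V i j - vlead a n H V i j = Poly_Mapping.single (?m (-1)) c'"
      using 3 by (cases "H (i, j) = V (i, j)")
        (simp_all add: l vweight_def is_turn_def c_def c'_def sig_az_eq sig_azbar_eq single_uminus)
    ultimately show ?thesis using d deg_m[of 1] deg_m[of "-1"] by (auto intro!: deg_le_single deg_lt_single)
  qed
  then show "deg_le n (vlead a n H V i j) (vdeg n H i j)"
    and "deg_lt n (vweight a H V i j - vlead a n H V i j) (vdeg n H i j)" by simp_all
qed

definition Zfactor :: "nat \<Rightarrow> lpoly" where
  "Zfactor n = (\<Prod>i\<in>{1..n}. xpow i (int n - 1) * ypow i (int n - 1))"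

lemma deg_le_Zfactor: "deg_le n (Zfactor n) 0"
proof -
  have "deg_le n (\<Prod>i\<in>{1..n}. xpow i (int n - 1) * ypow i (int n - 1)) (\<Sum>i\<in>{1..n}. 0)"
  proof (rule deg_le_prod)
    fix i assume i: "i \<in> {1..n}"
    have "xpow i (int n - 1) * ypow i (int n - 1)
        = Poly_Mapping.single (Poly_Mapping.single (X i) (int n - 1) + Poly_Mapping.single (Y i) (int n - 1)) 1"
      using lconst_xpow_ypow[of 1] by simp
    then show "deg_le n (xpow i (int n - 1) * ypow i (int n - 1)) 0"
      using ldeg_X_Y[OF i i] by (simp add: deg_le_single)
  qed simp
  then show ?thesis by (simp add: Zfactor_def)
qed

lemma select_part_state:
  assumes dw: "(H, V) \<in> dw_states n" and n: "n \<ge> 1"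
  shows "select_part n (Zfactor n * (\<Prod>i\<in>{1..n}. \<Prod>j\<in>{1..n}. vweight a H V i j))
       = (if (H, V) \<in> perm_states n
          then select_part n (Zfactor n * (\<Prod>i\<in>{1..n}. \<Prod>j\<in>{1..n}. vlead a n H V i j)) else 0)"
proof -
  define W where "W = (\<Prod>i\<in>{1..n}. \<Prod>j\<in>{1..n}. vweight a H V i j)"
  define T where "T = (\<Prod>i\<in>{1..n}. \<Prod>j\<in>{1..n}. vlead a n H V i j)"
  define D where "D = (\<Sum>i\<in>{1..n}. \<Sum>j\<in>{1..n}. vdeg n H i j)"
  have "deg_le n (\<Prod>(i, j)\<in>{1..n} \<times> {1..n}. vlead a n H V i j) (\<Sum>(i, j)\<in>{1..n} \<times> {1..n}. vdeg n H i j)"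
    by (rule deg_le_prod) (auto intro: vlead_approx)
  then have T: "deg_le n (Zfactor n * T) D"
    using deg_le_mult[OF deg_le_Zfactor] by (simp add: T_def D_def prod.cartesian_product sum.cartesian_product)
  have "deg_lt n ((\<Prod>(i, j)\<in>{1..n} \<times> {1..n}. vweight a H V i j) - (\<Prod>(i, j)\<in>{1..n} \<times> {1..n}. vlead a n H V i j))
          (\<Sum>(i, j)\<in>{1..n} \<times> {1..n}. vdeg n H i j)"
    by (rule deg_lt_prod_diff) (auto intro: vlead_approx)
  then have WT: "deg_lt n (Zfactor n * (W - T)) D"
    using deg_lt_mult_right[OF deg_le_Zfactor]
    by (simp add: W_def T_def D_def prod.cartesian_product sum.cartesian_product)
  have W: "Zfactor n * W = Zfactor n * T + Zfactor n * (W - T)" by (simp add: algebra_simps)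
  show ?thesis
  proof (cases "D = top_deg n")
    case True
    then have "(H, V) \<in> perm_states n" using sum_vdeg_le_top_deg(2)[OF dw n] by (simp add: D_def)
    moreover have "select_part n (Zfactor n * (W - T)) = 0"
      using select_part_eq_0_if_deg_lt[OF n] WT True by simp
    ultimately have "select_part n (Zfactor n * W) = select_part n (Zfactor n * T)"
      by (simp add: W select_part_add)
    then show ?thesis using \<open>(H, V) \<in> perm_states n\<close> by (simp add: W_def T_def)
  next
    case False
    then have "D < top_deg n" using sum_vdeg_le_top_deg(1)[OF dw n] by (simp add: D_def)
    moreover have "deg_le n (Zfactor n * W) D" unfolding W by (rule deg_le_add[OF T deg_lt_imp_le[OF WT]])
    ultimately have "select_part n (Zfactor n * W) = 0"
      using select_part_eq_0_if_deg_lt[OF n] deg_le_less_trans by blast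
    moreover have "(H, V) \<notin> perm_states n" using False sum_vdeg_le_top_deg(2)[OF dw n] by (simp add: D_def)
    ultimately show ?thesis by (simp add: W_def)
  qed
qed

lemma select_part_Ztilde:
  assumes "n \<ge> 1"
  shows "select_part n (Ztilde a n) = (\<Sum>xs\<in>permutations_of_set {1..n}.
           select_part n (Zfactor n * (\<Prod>i\<in>{1..n}. \<Prod>j\<in>{1..n}. vlead a n (perm_H n xs) (perm_V n xs) i j)))"
proof -
  let ?T = "\<lambda>(H, V). select_part n (Zfactor n * (\<Prod>i\<in>{1..n}. \<Prod>j\<in>{1..n}. vlead a n H V i j))"
  have "select_part n (Ztilde a n)
      = (\<Sum>s\<in>dw_states n. select_part n (Zfactor n * (case s of (H, V) \<Rightarrow> \<Prod>i\<in>{1..n}. \<Prod>j\<in>{1..n}. vweight a H V i j)))"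
    by (simp add: Ztilde_def Zfactor_def Zpf_def sum_distrib_left select_part_sum)
  also have "\<dots> = (\<Sum>s\<in>dw_states n. if s \<in> perm_states n then ?T s else 0)"
    using select_part_state[OF _ assms] by (intro sum.cong) auto
  also have "\<dots> = (\<Sum>s\<in>{s \<in> dw_states n. s \<in> perm_states n}. ?T s)"
    by (rule sum.inter_filter[symmetric, OF finite_dw_states])
  also have "{s \<in> dw_states n. s \<in> perm_states n} = perm_states n"
    by (auto simp: perm_states_def)
  also have "(\<Sum>s\<in>perm_states n. ?T s) = (\<Sum>xs\<in>permutations_of_set {1..n}. ?T (perm_H n xs, perm_V n xs))"
    using sum.reindex_bij_betw[OF bij_betw_perm_state, symmetric] .
  finally show ?thesis by simp
qed

section \<open>Weights of permutation states\<close>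

text \<open>The coefficient of the leading term at vertex (i, j) of the permutation state of xs, with the
  factor sigma(a^2) of the turns omitted: a at vertices of types 3, 4 and -1/a at types 5, 6.\<close>
definition lead_coeff :: "complex \<Rightarrow> nat list \<Rightarrow> nat \<Rightarrow> nat \<Rightarrow> complex" where
  "lead_coeff a xs i j =
     (if j = turn_col xs i then 1
      else if (j < turn_col xs i) = (j \<notin> set (drop (length xs - i) xs)) then a else - inverse a)"

definition perm_wt :: "complex \<Rightarrow> nat list \<Rightarrow> complex" where
  "perm_wt a xs = (\<Prod>i\<in>{1..length xs}. \<Prod>j\<in>set xs. lead_coeff a xs i j)"

definition pair_wt :: "complex \<Rightarrow> nat \<Rightarrow> nat \<Rightarrow> complex" where
  "pair_wt a p j = (if p < j then a^2 else inverse a ^ 2)"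

lemma lead_coeff_Cons: "1 \<le> i \<Longrightarrow> i \<le> length xs \<Longrightarrow> lead_coeff a (p # xs) i j = lead_coeff a xs i j"
  by (simp add: lead_coeff_def turn_col_Cons Suc_diff_le)

text \<open>A new bottom row turning at column p meets every other column j twice: in the new row at
  (n, j) and in column p at the row that turns at j; both vertices carry the same factor.\<close>
lemma perm_wt_Cons:
  assumes "distinct (p # xs)"
  shows "perm_wt a (p # xs) = perm_wt a xs * (\<Prod>j\<in>set xs. pair_wt a p j)"
proof -
  let ?m = "length xs"
  define h where "h j = (if p < j then a else - inverse a)" for j
  have pn: "p \<notin> set xs" and dx: "distinct xs" using assms by auto
  have bottom: "(\<Prod>j\<in>set (p # xs). lead_coeff a (p # xs) (Suc ?m) j) = (\<Prod>j\<in>set xs. h j)"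
  proof -
    have "lead_coeff a (p # xs) (Suc ?m) p = 1" by (simp add: lead_coeff_def turn_col_def)
    moreover have "(\<Prod>j\<in>set xs. lead_coeff a (p # xs) (Suc ?m) j) = (\<Prod>j\<in>set xs. h j)"
      using pn by (intro prod.cong) (auto simp: lead_coeff_def turn_col_def h_def)
    ultimately show ?thesis using pn by simp
  qed
  have upper: "(\<Prod>j\<in>set (p # xs). lead_coeff a (p # xs) i j) = h (turn_col xs i) * (\<Prod>j\<in>set xs. lead_coeff a xs i j)"
    if i: "i \<in> {1..?m}" for i
  proof -
    have "turn_col xs i \<in> set xs" using i turn_col_in_set by auto
    moreover have "p \<notin> set (drop (?m - i) xs)" using pn by (meson in_set_dropD)
    ultimately have "lead_coeff a xs i p = h (turn_col xs i)"
      using pn by (auto simp: lead_coeff_def h_def)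
    then show ?thesis using pn i by (simp add: lead_coeff_Cons)
  qed
  have "perm_wt a (p # xs) = (\<Prod>j\<in>set (p # xs). lead_coeff a (p # xs) (Suc ?m) j)
      * (\<Prod>i\<in>{1..?m}. \<Prod>j\<in>set (p # xs). lead_coeff a (p # xs) i j)"
    unfolding perm_wt_def by (simp add: atLeastAtMostSuc_conv)
  also have "(\<Prod>i\<in>{1..?m}. \<Prod>j\<in>set (p # xs). lead_coeff a (p # xs) i j)
      = (\<Prod>i\<in>{1..?m}. h (turn_col xs i)) * perm_wt a xs"
    by (simp only: prod.cong[OF refl upper] prod.distrib perm_wt_def)
  also have "(\<Prod>i\<in>{1..?m}. h (turn_col xs i)) = (\<Prod>j\<in>set xs. h j)"
    by (rule prod_turn_col[OF dx])
  also note bottom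
  also have "(\<Prod>j\<in>set xs. h j) * ((\<Prod>j\<in>set xs. h j) * perm_wt a xs)
      = perm_wt a xs * (\<Prod>j\<in>set xs. pair_wt a p j)"
  proof -
    have "(\<Prod>j\<in>set xs. h j) * (\<Prod>j\<in>set xs. h j) = (\<Prod>j\<in>set xs. pair_wt a p j)"
      unfolding prod.distrib[symmetric] by (intro prod.cong refl) (simp add: h_def pair_wt_def power2_eq_square)
    then show ?thesis by (metis mult.assoc mult.commute)
  qed
  finally show ?thesis .
qed

lemma sum_permutations_of_set_hd:
  assumes "finite W" "W \<noteq> {}"
  shows "(\<Sum>xs\<in>permutations_of_set W. g (hd xs) * perm_wt a xs)
       = (\<Sum>p\<in>W. g p * (\<Prod>j\<in>W-{p}. pair_wt a p j) * (\<Sum>ys\<in>permutations_of_set (W-{p}). perm_wt a ys))"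
proof -
  have "(\<Sum>xs\<in>permutations_of_set W. g (hd xs) * perm_wt a xs)
      = (\<Sum>p\<in>W. \<Sum>xs\<in>(#) p ` permutations_of_set (W - {p}). g (hd xs) * perm_wt a xs)"
    unfolding permutations_of_set_nonempty[OF assms(2)]
    by (rule sum.UNION_disjoint) (use assms in auto)
  also have "\<dots> = (\<Sum>p\<in>W. \<Sum>ys\<in>permutations_of_set (W - {p}). g p * perm_wt a (p # ys))"
    by (subst sum.reindex) (auto intro: sum.cong)
  also have "\<dots> = (\<Sum>p\<in>W. \<Sum>ys\<in>permutations_of_set (W - {p}). g p * (\<Prod>j\<in>W-{p}. pair_wt a p j) * perm_wt a ys)"
  proof (intro sum.cong refl)
    fix p ys assume "p \<in> W" "ys \<in> permutations_of_set (W - {p})"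
    then have "distinct (p # ys)" "set ys = W - {p}" by (auto dest: permutations_of_setD)
    then show "g p * perm_wt a (p # ys) = g p * (\<Prod>j\<in>W-{p}. pair_wt a p j) * perm_wt a ys"
      by (simp add: perm_wt_Cons)
  qed
  finally show ?thesis by (simp add: sum_distrib_left)
qed

fun qint :: "complex \<Rightarrow> nat \<Rightarrow> complex" where
  "qint a 0 = 1"
| "qint a (Suc k) = a^2 * qint a k + (inverse a ^ 2) ^ Suc k"

fun qfact :: "complex \<Rightarrow> nat \<Rightarrow> complex" where
  "qfact a 0 = 1"
| "qfact a (Suc k) = qint a k * qfact a k"

lemma sum_prod_pair_wt_insert_max:
  assumes "finite W" "\<And>p. p \<in> W \<Longrightarrow> p < M"
  shows "(\<Sum>p\<in>W. \<Prod>j\<in>insert M W - {p}. pair_wt a p j) = a^2 * (\<Sum>p\<in>W. \<Prod>j\<in>W-{p}. pair_wt a p j)"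
proof -
  have "(\<Prod>j\<in>insert M W - {p}. pair_wt a p j) = a^2 * (\<Prod>j\<in>W-{p}. pair_wt a p j)" if p: "p \<in> W" for p
  proof -
    have "insert M W - {p} = insert M (W - {p})" "M \<notin> W - {p}" using p assms(2) by force+
    then show ?thesis using assms p by (simp add: pair_wt_def)
  qed
  then show ?thesis by (simp add: sum_distrib_left)
qed

lemma sum_prod_pair_wt:
  assumes "finite W" "W \<noteq> {}"
  shows "(\<Sum>p\<in>W. \<Prod>j\<in>W-{p}. pair_wt a p j) = qint a (card W - 1)"
  using assms
proof (induction "card W" arbitrary: W rule: less_induct)
  case less
  define M where "M = Max W"
  define W' where "W' = W - {M}"
  have W: "W = insert M W'" and MW': "M \<notin> W'" and fW': "finite W'"
    using less.prems Max_in[OF less.prems] unfolding M_def[symmetric] by (auto simp: W'_def)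
  have lt: "\<And>p. p \<in> W' \<Longrightarrow> p < M"
    using less.prems by (auto simp: W'_def M_def) (meson Max_ge le_neq_implies_less)
  show ?case
  proof (cases "W' = {}")
    case True
    then show ?thesis using W by simp
  next
    case False
    obtain k where k: "card W' = Suc k" using False fW' by (metis card_0_eq not0_implies_Suc)
    have "(\<Sum>p\<in>W. \<Prod>j\<in>W-{p}. pair_wt a p j)
        = (\<Prod>j\<in>W'. pair_wt a M j) + (\<Sum>p\<in>W'. \<Prod>j\<in>insert M W' - {p}. pair_wt a p j)"
      unfolding W using fW' MW' by simp
    also have "(\<Prod>j\<in>W'. pair_wt a M j) = (\<Prod>j\<in>W'. inverse a ^ 2)"
      by (intro prod.cong refl) (auto dest: lt simp: pair_wt_def)
    also have "(\<Sum>p\<in>W'. \<Prod>j\<in>insert M W' - {p}. pair_wt a p j) = a^2 * qint a k"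
      using sum_prod_pair_wt_insert_max[OF fW' lt] less.hyps[of W'] False fW' W MW' k by simp
    finally show ?thesis using W fW' MW' k by simp
  qed
qed

lemma sum_perm_wt:
  assumes "finite W"
  shows "(\<Sum>xs\<in>permutations_of_set W. perm_wt a xs) = qfact a (card W)"
  using assms
proof (induction "card W" arbitrary: W rule: less_induct)
  case less
  show ?case
  proof (cases "W = {}")
    case True
    then show ?thesis by (simp add: perm_wt_def)
  next
    case False
    then obtain k where k: "card W = Suc k" using less.prems by (metis card_0_eq not0_implies_Suc)
    have "(\<Sum>xs\<in>permutations_of_set W. perm_wt a xs)
        = (\<Sum>p\<in>W. (\<Prod>j\<in>W-{p}. pair_wt a p j) * (\<Sum>ys\<in>permutations_of_set (W-{p}). perm_wt a ys))"
      using sum_permutations_of_set_hd[OF less.prems False, of "\<lambda>_. 1"] by simp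
    also have "\<dots> = (\<Sum>p\<in>W. (\<Prod>j\<in>W-{p}. pair_wt a p j) * qfact a k)"
      using less.hyps less.prems k by (intro sum.cong refl) (simp add: card_Diff1_less)
    also have "\<dots> = qfact a (card W)"
      unfolding sum_distrib_right[symmetric] sum_prod_pair_wt[OF less.prems False] k by simp
    finally show ?thesis .
  qed
qed

lemma sigma_mult_qint:
  assumes "a \<noteq> 0"
  shows "sigma (a^2) * qint a k = sigma (a ^ (2 * Suc k))"
proof (induction k)
  case (Suc k)
  define b where "b = a^2"
  define c where "c = inverse a ^ 2"
  have bc: "sigma (a ^ (2 * k)) = b^k - c^k" for k
    by (simp add: sigma_def b_def c_def power_mult power_inverse)
  have b_c: "sigma (a^2) = b - c"
    by (simp add: sigma_def b_def c_def power_inverse)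
  have "sigma (a^2) * qint a (Suc k) = b * (sigma (a^2) * qint a k) + (b - c) * c ^ Suc k"
    by (simp only: qint.simps b_c) (simp add: b_def c_def algebra_simps)
  also have "\<dots> = b * (b ^ Suc k - c ^ Suc k) + (b - c) * c ^ Suc k"
    using Suc.IH bc[of "Suc k"] by simp
  also have "\<dots> = b ^ Suc (Suc k) - c ^ Suc (Suc k)"
    by (simp add: algebra_simps)
  also have "\<dots> = sigma (a ^ (2 * Suc (Suc k)))"
    using bc[of "Suc (Suc k)"] by simp
  finally show ?case .
qed simp

lemma sigma_pow_mult_qfact:
  assumes "a \<noteq> 0"
  shows "sigma (a^2) ^ m * qfact a m = (\<Prod>i\<in>{1..m}. sigma (a ^ (2 * i)))"
proof (induction m)
  case (Suc m)
  have "sigma (a^2) ^ Suc m * qfact a (Suc m) = (sigma (a^2) ^ m * qfact a m) * (sigma (a^2) * qint a m)"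
    by (simp add: algebra_simps)
  also have "\<dots> = (\<Prod>i\<in>{1..m}. sigma (a ^ (2 * i))) * sigma (a ^ (2 * Suc m))"
    using Suc sigma_mult_qint[OF assms] by simp
  finally show ?case by (simp add: atLeastAtMostSuc_conv mult.commute)
qed simp

text \<open>sigma(a z) at the corner (n, n), divided by its leading term a x_n / y_n.\<close>
definition corner_factor :: "nat \<Rightarrow> complex \<Rightarrow> lpoly" where
  "corner_factor n a = 1 - lconst (inverse a ^ 2) * xpow n (-2) * ypow n 2"

definition xtop :: "nat \<Rightarrow> lpoly" where
  "xtop n = (\<Prod>i\<in>{1..n}. xpow i (2 * (int n - 1)))"

lemma sig_az_corner:
  assumes "a \<noteq> 0"
  shows "sig_az a n n = lconst a * (xpow n 1 * ypow n (-1)) * corner_factor n a"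
proof -
  have "lconst a * (xpow n 1 * ypow n (-1)) * corner_factor n a
      = lconst a * xpow n 1 * ypow n (-1)
        - lconst (a * inverse a ^ 2) * (xpow n 1 * xpow n (-2)) * (ypow n (-1) * ypow n 2)"
    by (simp add: corner_factor_def lconst_mult algebra_simps)
  also have "a * inverse a ^ 2 = inverse a" using assms by (simp add: field_simps power2_eq_square)
  finally show ?thesis by (simp add: sig_az_def xpow_add ypow_add)
qed

lemma vlead_perm_state:
  assumes xs: "xs \<in> permutations_of_set {1..n}" and ij: "i \<in> {1..n}" "j \<in> {1..n}" and a: "a \<noteq> 0"
  shows "vlead a n (perm_H n xs) (perm_V n xs) i j
     = lconst ((if j = turn_col xs i then sigma (a^2) else 1) * lead_coeff a xs i j)
       * (if j = turn_col xs i then 1 else xpow i 1 * ypow j (-1))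
       * (if i = n \<and> j = n \<and> j \<noteq> turn_col xs i then corner_factor n a else 1)"
proof -
  have H: "perm_H n xs (i, j) = (j < turn_col xs i)" using ij by (simp add: perm_H_def hedges_def)
  have V: "perm_V n xs (i, j) = (j \<notin> set (drop (n - i) xs))" using ij by (simp add: perm_V_def vedges_def)
  have turn: "is_turn (perm_H n xs) i j \<longleftrightarrow> j = turn_col xs i" by (rule is_turn_perm_H[OF xs ij])
  have coeff: "j \<noteq> turn_col xs i \<Longrightarrow>
      lead_coeff a xs i j = (if perm_H n xs (i, j) = perm_V n xs (i, j) then a else - inverse a)"
    unfolding H V lead_coeff_def length_perm[OF xs] by simp
  consider "j = turn_col xs i" | "j \<noteq> turn_col xs i" "i = n" "j = n" | "j \<noteq> turn_col xs i" "\<not> (i = n \<and> j = n)"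
    by blast
  then show ?thesis
  proof cases
    case 1
    then show ?thesis using turn by (simp add: vlead_def lead_coeff_def)
  next
    case 2
    have "perm_H n xs (n, n) = False" "perm_V n xs (n, n) = False"
      using H V 2 turn_col_range[OF xs ij(1)] permutations_of_setD[OF xs] length_perm[OF xs] ij by auto
    then show ?thesis
      using 2 turn coeff sig_az_corner[OF a] by (simp add: vlead_def vweight_def is_turn_def)
  next
    case 3
    then have corner: "(i = n \<and> j = n) = False" by simp
    show ?thesis using 3 turn coeff by (simp add: vlead_def corner mult.assoc)
  qed
qed

lemma prod_if_eq_1:
  assumes "finite S" "p \<in> S"
  shows "(\<Prod>j\<in>S. if j = p then 1 else c) = c ^ (card S - 1)"
proof -
  have "(\<Prod>j\<in>S. if j = p then 1 else c) = (if p = p then 1 else c) * (\<Prod>j\<in>S - {p}. if j = p then 1 else c)"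
    by (rule prod.remove[OF assms])
  also have "(\<Prod>j\<in>S - {p}. if j = p then 1 else c) = (\<Prod>j\<in>S - {p}. c)" by (intro prod.cong) auto
  finally show ?thesis using assms by simp
qed

text \<open>Off a permutation matrix every row and every column contains n - 1 entries.\<close>
lemma prod_off_graph_monomials:
  assumes p: "bij_betw p {1..n} {1..n}" and n: "n \<ge> 1"
  shows "(\<Prod>i\<in>{1..n}. \<Prod>j\<in>{1..n}. if j = p i then 1 else xpow i 1 * ypow j (-1))
       = (\<Prod>i\<in>{1..n}. xpow i (int n - 1) * ypow i (- (int n - 1)))"
proof -
  define q where "q = inv_into {1..n} p"
  have pq: "j = p i \<longleftrightarrow> i = q j" if "i \<in> {1..n}" "j \<in> {1..n}" for i j
    using p that unfolding q_def bij_betw_def by (auto simp: inv_into_f_f f_inv_into_f)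
  have q_range: "q j \<in> {1..n}" if "j \<in> {1..n}" for j
    using p that unfolding q_def bij_betw_def by (metis inv_into_into)
  have "(\<Prod>i\<in>{1..n}. \<Prod>j\<in>{1..n}. if j = p i then 1 else xpow i 1 * ypow j (-1))
      = (\<Prod>i\<in>{1..n}. \<Prod>j\<in>{1..n}. if j = p i then 1 else xpow i 1)
      * (\<Prod>i\<in>{1..n}. \<Prod>j\<in>{1..n}. if j = p i then 1 else ypow j (-1))"
  proof -
    have "(if j = p i then 1 else xpow i 1 * ypow j (-1))
        = (if j = p i then 1 else xpow i 1) * (if j = p i then 1 else ypow j (-1))" for i j
      by simp
    then show ?thesis by (simp only: prod.distrib)
  qed
  also have "(\<Prod>i\<in>{1..n}. \<Prod>j\<in>{1..n}. if j = p i then 1 else xpow i 1) = (\<Prod>i\<in>{1..n}. xpow i (int n - 1))"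
  proof (intro prod.cong refl)
    fix i assume "i \<in> {1..n}"
    then have "p i \<in> {1..n}" using p by (auto simp: bij_betw_def)
    then show "(\<Prod>j\<in>{1..n}. if j = p i then 1 else xpow i 1) = xpow i (int n - 1)"
      using prod_if_eq_1[of "{1..n}" "p i" "xpow i 1"] n by (simp add: xpow_power of_nat_diff)
  qed
  also have "(\<Prod>i\<in>{1..n}. \<Prod>j\<in>{1..n}. if j = p i then 1 else ypow j (-1))
      = (\<Prod>j\<in>{1..n}. \<Prod>i\<in>{1..n}. if i = q j then 1 else ypow j (-1))"
    by (subst prod.swap) (intro prod.cong refl, simp add: pq)
  also have "\<dots> = (\<Prod>j\<in>{1..n}. ypow j (- (int n - 1)))"
  proof (intro prod.cong refl)
    fix j assume "j \<in> {1..n}"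
    then show "(\<Prod>i\<in>{1..n}. if i = q j then 1 else ypow j (-1)) = ypow j (- (int n - 1))"
      using prod_if_eq_1[of "{1..n}" "q j" "ypow j (-1)"] q_range n by (simp add: ypow_power of_nat_diff)
  qed
  finally show ?thesis by (simp add: prod.distrib)
qed

lemma prod_lead_coeff_perm:
  assumes xs: "xs \<in> permutations_of_set {1..n}"
  shows "(\<Prod>i\<in>{1..n}. \<Prod>j\<in>{1..n}. lconst ((if j = turn_col xs i then sigma (a^2) else 1) * lead_coeff a xs i j))
       = lconst (sigma (a^2) ^ n * perm_wt a xs)"
proof -
  have "(\<Prod>j\<in>{1..n}. if j = turn_col xs i then sigma (a^2) else 1) = sigma (a^2)" if "i \<in> {1..n}" for i
    using turn_col_range[OF xs that] by (simp add: prod.delta)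
  then show ?thesis
    using permutations_of_setD[OF xs] length_perm[OF xs]
    by (simp add: lconst_prod[symmetric] prod.distrib perm_wt_def)
qed

lemma Zfactor_mult_prod_vlead_perm:
  assumes xs: "xs \<in> permutations_of_set {1..n}" and n: "n \<ge> 1" and a: "a \<noteq> 0"
  shows "Zfactor n * (\<Prod>i\<in>{1..n}. \<Prod>j\<in>{1..n}. vlead a n (perm_H n xs) (perm_V n xs) i j)
       = lconst (sigma (a^2) ^ n * perm_wt a xs) * xtop n * (if hd xs = n then 1 else corner_factor n a)"
proof -
  let ?p = "turn_col xs"
  let ?A = "\<lambda>i j. lconst ((if j = ?p i then sigma (a^2) else 1) * lead_coeff a xs i j)"
  let ?M = "\<lambda>i j. if j = ?p i then 1 else xpow i 1 * ypow j (-1)"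
  let ?C = "\<lambda>i j. if i = n \<and> j = n \<and> j \<noteq> ?p i then corner_factor n a else 1"
  have p: "bij_betw ?p {1..n} {1..n}" by (rule bij_betw_turn_col_perm[OF xs])
  have "(\<Prod>i\<in>{1..n}. \<Prod>j\<in>{1..n}. vlead a n (perm_H n xs) (perm_V n xs) i j)
      = (\<Prod>i\<in>{1..n}. \<Prod>j\<in>{1..n}. ?A i j) * (\<Prod>i\<in>{1..n}. \<Prod>j\<in>{1..n}. ?M i j)
        * (\<Prod>i\<in>{1..n}. \<Prod>j\<in>{1..n}. ?C i j)"
    by (simp add: vlead_perm_state[OF xs _ _ a] prod.distrib)
  also have "(\<Prod>i\<in>{1..n}. \<Prod>j\<in>{1..n}. ?A i j) = lconst (sigma (a^2) ^ n * perm_wt a xs)"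
    by (rule prod_lead_coeff_perm[OF xs])
  also have "(\<Prod>i\<in>{1..n}. \<Prod>j\<in>{1..n}. ?C i j) = (if hd xs = n then 1 else corner_factor n a)"
  proof -
    have "xs \<noteq> []" using length_perm[OF xs] n by auto
    then have hd: "?p n = hd xs" using length_perm[OF xs] by (simp add: turn_col_def hd_conv_nth)
    have "?C i j = (if i = n then (if j = n then (if n \<noteq> ?p n then corner_factor n a else 1) else 1) else 1)"
      for i j by auto
    then have "(\<Prod>i\<in>{1..n}. \<Prod>j\<in>{1..n}. ?C i j)
        = (\<Prod>i\<in>{1..n}. if i = n then (if n \<noteq> ?p n then corner_factor n a else 1) else 1)"
      using n by (intro prod.cong refl) (simp add: prod.delta)
    then show ?thesis using n hd by (auto simp: prod.delta)
  qed
  finally have "Zfactor n * (\<Prod>i\<in>{1..n}. \<Prod>j\<in>{1..n}. vlead a n (perm_H n xs) (perm_V n xs) i j)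
      = lconst (sigma (a^2) ^ n * perm_wt a xs) * (Zfactor n * (\<Prod>i\<in>{1..n}. \<Prod>j\<in>{1..n}. ?M i j))
        * (if hd xs = n then 1 else corner_factor n a)"
    by (simp add: ac_simps)
  also have "Zfactor n * (\<Prod>i\<in>{1..n}. \<Prod>j\<in>{1..n}. ?M i j) = xtop n"
    unfolding prod_off_graph_monomials[OF p n] Zfactor_def xtop_def prod.distrib[symmetric]
    by (intro prod.cong refl) (simp add: ac_simps xpow_add ypow_add)
  finally show ?thesis .
qed

lemma sigma_pow_mult_sum_perm_wt:
  assumes "a \<noteq> 0"
  shows "sigma (a^2) ^ n * (\<Sum>xs\<in>permutations_of_set {1..n}. perm_wt a xs) = (\<Prod>i\<in>{1..n}. sigma (a ^ (2 * i)))"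
  using sum_perm_wt[of "{1..n}" a] sigma_pow_mult_qfact[OF assms] by simp

lemma sum_perm_wt_hd_ne:
  assumes n: "n = Suc (Suc k)"
  shows "(\<Sum>xs\<in>permutations_of_set {1..n}. of_bool (hd xs \<noteq> n) * perm_wt a xs) = a^2 * qint a k * qfact a (Suc k)"
proof -
  have ins: "{1..n} = insert n {1..Suc k}" and notin: "n \<notin> {1..Suc k}" and lt: "\<And>p. p \<in> {1..Suc k} \<Longrightarrow> p < n"
    using n by auto
  have "(\<Sum>xs\<in>permutations_of_set {1..n}. of_bool (hd xs \<noteq> n) * perm_wt a xs)
      = (\<Sum>p\<in>{1..n}. of_bool (p \<noteq> n) * (\<Prod>j\<in>{1..n}-{p}. pair_wt a p j)
           * (\<Sum>ys\<in>permutations_of_set ({1..n}-{p}). perm_wt a ys))"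
    using n by (intro sum_permutations_of_set_hd) auto
  also have "\<dots> = (\<Sum>p\<in>{1..Suc k}. (\<Prod>j\<in>insert n {1..Suc k}-{p}. pair_wt a p j) * qfact a (Suc k))"
  proof -
    have "(\<Sum>ys\<in>permutations_of_set (insert n {1..Suc k} - {p}). perm_wt a ys) = qfact a (Suc k)"
      if "p \<in> {1..Suc k}" for p
      using that notin by (simp add: sum_perm_wt card_Diff_singleton)
    moreover have "p \<in> {1..Suc k} \<Longrightarrow> p \<noteq> n" for p using notin by auto
    ultimately show ?thesis unfolding ins using notin by simp
  qed
  also have "\<dots> = (\<Sum>p\<in>{1..Suc k}. \<Prod>j\<in>insert n {1..Suc k}-{p}. pair_wt a p j) * qfact a (Suc k)"
    by (rule sum_distrib_right[symmetric])
  also have "(\<Sum>p\<in>{1..Suc k}. \<Prod>j\<in>insert n {1..Suc k}-{p}. pair_wt a p j)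
      = a^2 * (\<Sum>p\<in>{1..Suc k}. \<Prod>j\<in>{1..Suc k}-{p}. pair_wt a p j)"
    by (rule sum_prod_pair_wt_insert_max[OF finite_atLeastAtMost lt])
  also have "(\<Sum>p\<in>{1..Suc k}. \<Prod>j\<in>{1..Suc k}-{p}. pair_wt a p j) = qint a k"
    using sum_prod_pair_wt[of "{1..Suc k}" a] by simp
  finally show ?thesis .
qed

lemma sigma_pow_mult_sum_perm_wt_hd_ne:
  assumes a: "a \<noteq> 0" and n: "n \<ge> 1"
  shows "sigma (a^2) ^ n * inverse a ^ 2 * (\<Sum>xs\<in>permutations_of_set {1..n}. of_bool (hd xs \<noteq> n) * perm_wt a xs)
       = (\<Prod>i\<in>{1..n-1}. sigma (a ^ (2 * i))) * sigma (a ^ (2 * (n - 1)))"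
proof (cases "n = 1")
  case True
  have "hd xs = n" if "xs \<in> permutations_of_set {1..n}" for xs
  proof -
    have s: "set xs = {n}" using permutations_of_setD(1)[OF that] True by simp
    then have "xs \<noteq> []" by auto
    then show ?thesis using hd_in_set[of xs] s by simp
  qed
  then have "(\<Sum>xs\<in>permutations_of_set {1..n}. of_bool (hd xs \<noteq> n) * perm_wt a xs) = 0"
    by (intro sum.neutral) simp
  moreover have "sigma (a ^ (2 * (n - 1))) = 0" using True by (simp add: sigma_def)
  ultimately show ?thesis by simp
next
  case False
  define k where "k = n - 2"
  have k: "n = Suc (Suc k)" using n False by (simp add: k_def)
  have inv: "inverse a ^ 2 * a ^ 2 = 1" using a by (simp add: field_simps)
  have "sigma (a^2) ^ n * inverse a ^ 2 * (\<Sum>xs\<in>permutations_of_set {1..n}. of_bool (hd xs \<noteq> n) * perm_wt a xs)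
      = sigma (a^2) ^ n * inverse a ^ 2 * (a^2 * qint a k * qfact a (Suc k))"
    by (simp only: sum_perm_wt_hd_ne[OF k])
  also have "\<dots> = (sigma (a^2) ^ Suc k * qfact a (Suc k)) * (sigma (a^2) * qint a k)"
    using inv unfolding k by (simp add: algebra_simps)
  also have "\<dots> = (\<Prod>i\<in>{1..Suc k}. sigma (a ^ (2 * i))) * sigma (a ^ (2 * Suc k))"
    using sigma_pow_mult_qfact[OF a, of "Suc k"] sigma_mult_qint[OF a, of k] by simp
  finally show ?thesis using k by simp
qed

lemma select_part_xtop:
  assumes "n \<ge> 1"
  shows "select_part n (lconst c * (xtop n * xpow n e * ypow n f)) = lconst c * (xtop n * xpow n e * ypow n f)"
proof -
  define m where "m = (\<Sum>i\<in>{1..n}. Poly_Mapping.single (X i) (2 * (int n - 1)))"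
  have "xtop n = Poly_Mapping.single m 1"
    unfolding xtop_def m_def by (rule prod_xpow) simp
  then have "lconst c * (xtop n * xpow n e * ypow n f)
      = Poly_Mapping.single (m + Poly_Mapping.single (X n) e + Poly_Mapping.single (Y n) f) c"
    by (simp add: lconst_def xpow_def ypow_def mult_single)
  moreover have "selected n (m + Poly_Mapping.single (X n) e + Poly_Mapping.single (Y n) f)"
  proof -
    have "Poly_Mapping.lookup m (X k) = 2 * (int n - 1)" "Poly_Mapping.lookup m (Y k) = 0"
      if "k \<in> {1..n-1}" for k
    proof -
      have "Poly_Mapping.lookup m (X k) = (\<Sum>i\<in>{1..n}. if i = k then 2 * (int n - 1) else 0)"
        unfolding m_def lookup_sum by (intro sum.cong refl) (auto simp: lookup_single when_def)
      then show "Poly_Mapping.lookup m (X k) = 2 * (int n - 1)" using that by auto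
      show "Poly_Mapping.lookup m (Y k) = 0" by (simp add: m_def lookup_sum lookup_single)
    qed
    then show ?thesis by (auto simp: selected_def lookup_add lookup_single when_def)
  qed
  ultimately show ?thesis by (simp add: select_part_single)
qed

lemma prod_atLeastAtMost_1_last:
  fixes n :: nat
  assumes "n \<ge> 1"
  shows "(\<Prod>i\<in>{1..n}. f i) = (\<Prod>i\<in>{1..n-1}. f i) * f n"
proof -
  have "{1..n} = insert n {1..n-1}" "n \<notin> {1..n-1}" using assms by auto
  then show ?thesis by (simp add: mult.commute)
qed

lemma lconst_mult_corner_factor:
  "lconst c * P * (if b then 1 else corner_factor n a)
     = lconst c * P - lconst (c * inverse a ^ 2 * of_bool (\<not> b)) * (P * xpow n (-2) * ypow n 2)"
  by (cases b) (simp_all add: corner_factor_def lconst_mult algebra_simps)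

lemma sum_lconst_mult: "(\<Sum>x\<in>A. lconst (f x) * P) = lconst (\<Sum>x\<in>A. f x) * P"
  by (simp add: lconst_sum sum_distrib_right)

lemma select_part_Ztilde_eq:
  assumes a: "a \<noteq> 0" and n: "n \<ge> 1"
  shows "select_part n (Ztilde a n)
       = lconst (sigma (a^2) ^ n * (\<Sum>xs\<in>permutations_of_set {1..n}. perm_wt a xs)) * xtop n
       - lconst (sigma (a^2) ^ n * inverse a ^ 2 *
                 (\<Sum>xs\<in>permutations_of_set {1..n}. of_bool (hd xs \<noteq> n) * perm_wt a xs))
         * (xtop n * xpow n (-2) * ypow n 2)"
    (is "_ = lconst ?A * _ - lconst ?B * ?Y")
proof -
  let ?P = "permutations_of_set {1..n}"
  let ?c = "\<lambda>xs. sigma (a^2) ^ n * perm_wt a xs"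
  have A: "?A = (\<Sum>xs\<in>?P. ?c xs)" and B: "?B = (\<Sum>xs\<in>?P. ?c xs * inverse a ^ 2 * of_bool (hd xs \<noteq> n))"
    unfolding sum_distrib_left by (simp_all add: mult_ac)
  have "select_part n (Ztilde a n)
      = (\<Sum>xs\<in>?P. select_part n (lconst (?c xs) * xtop n * (if hd xs = n then 1 else corner_factor n a)))"
    using select_part_Ztilde[OF n] Zfactor_mult_prod_vlead_perm[OF _ n a] by simp
  also have "\<dots> = select_part n (lconst ?A * xtop n - lconst ?B * ?Y)"
    by (simp only: select_part_sum[symmetric] lconst_mult_corner_factor sum_subtractf sum_lconst_mult A B)
  also have "\<dots> = lconst ?A * xtop n - lconst ?B * ?Y"
    using select_part_xtop[OF n, of ?A 0 0] by (simp add: select_part_diff select_part_xtop[OF n])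
  finally show ?thesis .
qed

lemma lconst_mult_xtop_diff:
  assumes "n \<ge> 1"
  shows "lconst (c * d) * xtop n - lconst (c * e) * (xtop n * xpow n (-2) * ypow n 2)
       = (\<Prod>i\<in>{1..n-1}. xpow i (2 * (int n - 1))) *
         (lconst c * (lconst d * xpow n (2 * (int n - 1)) - lconst e * xpow n (2 * (int n - 2)) * ypow n 2))"
proof -
  have X: "xtop n = (\<Prod>i\<in>{1..n-1}. xpow i (2 * (int n - 1))) * xpow n (2 * (int n - 1))"
    unfolding xtop_def by (rule prod_atLeastAtMost_1_last[OF assms])
  have "xpow n (2 * (int n - 1)) * xpow n (-2) = xpow n (2 * (int n - 2))"
    by (simp add: xpow_add algebra_simps)
  then have "xtop n * xpow n (-2) * ypow n 2
      = (\<Prod>i\<in>{1..n-1}. xpow i (2 * (int n - 1))) * (xpow n (2 * (int n - 2)) * ypow n 2)"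
    unfolding X by (simp only: mult.assoc)
  then show ?thesis unfolding X by (simp add: lconst_mult algebra_simps)
qed

theorem lemma5:
  fixes a :: complex and n :: nat
  assumes "a \<noteq> 0" and "n \<ge> 1"
  shows "select_part n (Ztilde a n) =
    (\<Prod>i\<in>{1..n-1}. xpow i (2 * (int n - 1))) *
    (lconst (\<Prod>i\<in>{1..n-1}. sigma (a ^ (2 * i))) *
      (lconst (sigma (a ^ (2 * n))) * xpow n (2 * (int n - 1))
       - lconst (sigma (a ^ (2 * (n - 1)))) * xpow n (2 * (int n - 2)) * ypow n 2))"
proof -
  have "sigma (a^2) ^ n * (\<Sum>xs\<in>permutations_of_set {1..n}. perm_wt a xs)
      = (\<Prod>i\<in>{1..n-1}. sigma (a ^ (2 * i))) * sigma (a ^ (2 * n))"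
    using sigma_pow_mult_sum_perm_wt[OF assms(1)] prod_atLeastAtMost_1_last[OF assms(2)] by simp
  then show ?thesis
    unfolding select_part_Ztilde_eq[OF assms] sigma_pow_mult_sum_perm_wt_hd_ne[OF assms]
    by (simp only: lconst_mult_xtop_diff[OF assms(2)])
qed

end
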